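(* In the setting described in the context, if either ($0<v_0<1$ and $\omega_0<-\frac{\nu}{2}f_\infty(v_0)$) or ($v_0>1$ and $\omega_0>-\frac{\nu}{2}f_\infty(v_0)$), then type B blowup occurs.
   Context: Fix $\nu>0$, $v_0>0$ with $v_0\neq1$, and $\omega_0\in\mathbb{R}$. Consider the real ODE system $\frac{d\omega_{-2,i}}{dt}=\omega_{-2,i}^2\frac{1-2v_c^2+5v_c^4}{4v_c^2(1-v_c^2)^2}-\nu\omega_{-2,i}$, $\frac{dv_c}{dt}=-\omega_{-2,i}\frac{1+v_c^2}{4v_c(1-v_c^2)}$ with $v_c(0)=v_0$, $\omega_{-2,i}(0)=\omega_0$; its solution (continued through $v_c=1$) is characterized as follows. Let $F(v)=\frac{v(v^2-1)}{(v^2+1)^2}+\arctan v$, which is a strictly increasing bijection from $(0,\infty)$ onto $(0,\pi/2)$, and let $G(t)=F(v_0)+\frac{2\omega_0 v_0(1-e^{-\nu t})}{\nu(v_0^2-1)(v_0^2+1)^2}$. Then $v_c(t)$ is defined by $F(v_c(t))=G(t)$ for as long as $G(t)\in(0,\pi/2)$, and $\omega_{-2,i}(t)=\omega_0e^{-\nu t}\frac{v_0}{v_c(t)}\frac{v_c(t)^2-1}{v_0^2-1}\left(\frac{v_c(t)^2+1}{v_0^2+1}\right)^2$. Type A blowup means: there is a finite $t_c>0$ with $v_c(t)>0$ on $[0,t_c)$ and $v_c(t)\to0^+$ as $t\to t_c^-$. Type B blowup means: there is a finite $t_c>0$ with $v_c(t)\in(0,\infty)$ on $[0,t_c)$ and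 $v_c(t)\to+\infty$ as $t\to t_c^-$. Here $f_0(x)=(x^2-1)^2+\frac{(x^2+1)^2}{x}(x^2-1)\arctan(x)$ and $f_\infty(x)=(x^2-1)^2+\frac{(x^2+1)^2}{x}(x^2-1)\left(\arctan(x)-\frac{\pi}{2}\right)$ for $x>0$. *)

theory Defs
  imports "HOL-Analysis.Analysis"
begin

definition F :: "real \<Rightarrow> real" where
  "F v = v * (v^2 - 1) / (v^2 + 1)^2 + arctan v"

definition G :: "real \<Rightarrow> real \<Rightarrow> real \<Rightarrow> real \<Rightarrow> real" where
  "G \<nu> v0 \<omega>0 t = F v0 + 2 * \<omega>0 * v0 * (1 - exp (- \<nu> * t))
      / (\<nu> * (v0^2 - 1) * (v0^2 + 1)^2)"

text \<open>The solution v_c(t): the unique v > 0 with F v = G t (meaningful while G t lies in (0, pi/2)).\<close>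
definition vc :: "real \<Rightarrow> real \<Rightarrow> real \<Rightarrow> real \<Rightarrow> real" where
  "vc \<nu> v0 \<omega>0 t = (THE v. v > 0 \<and> F v = G \<nu> v0 \<omega>0 t)"

definition f_inf :: "real \<Rightarrow> real" where
  "f_inf x = (x^2 - 1)^2 + (x^2 + 1)^2 / x * (x^2 - 1) * (arctan x - pi / 2)"

definition type_B_blowup :: "real \<Rightarrow> real \<Rightarrow> real \<Rightarrow> bool" where
  "type_B_blowup \<nu> v0 \<omega>0 \<longleftrightarrow>
     (\<exists>tc > 0. (\<forall>t \<in> {0..<tc}. 0 < G \<nu> v0 \<omega>0 t \<and> G \<nu> v0 \<omega>0 t < pi / 2)
        \<and> filterlim (vc \<nu> v0 \<omega>0) at_top (at_left tc))"

end

theory Submission imports Defs "HOL-Real_Asymp.Real_Asymp" begin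

text \<open>Along the solution, G t = F v0 + c (1 - exp (-\<nu> t)) with a constant c. The hypothesis
  says exactly that c exceeds the gap pi/2 - F v0 (because f_inf v = (F v - pi/2) (v^2 - 1) (v^2 + 1)^2 / v),
  so G reaches pi/2 at a finite time tc. Since F increases to pi/2 at infinity, v_c = F^-1 \<circ> G
  tends to infinity as t approaches tc from the left.\<close>

lemma F_has_real_derivative: "(F has_real_derivative 8 * x^2 / (x^2 + 1)^3) (at x)"
proof -
  have "0 < x^2 + (1::real)"
    by (simp add: add_nonneg_pos)
  then have nz: "x^2 + 1 \<noteq> (0::real)" "1 + x^2 \<noteq> (0::real)" "(x^2 + 1)^2 \<noteq> (0::real)"
    by auto
  show ?thesis
    unfolding F_def[abs_def]
    apply (rule derivative_eq_intros refl)+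
        apply (simp add: nz)
       apply (rule refl)
      apply (rule DERIV_arctan)
    using nz apply (simp add: divide_simps)
    apply (simp add: eval_nat_numeral algebra_simps)
    done
qed

lemma F_strict_mono:
  assumes "0 \<le> a" "a < b"
  shows "F a < F b"
proof (rule DERIV_pos_imp_increasing_open[OF assms(2)])
  fix x assume "a < x" "x < b"
  then have "0 < 8 * x^2 / (x^2 + 1)^3" using assms by (simp add: add_nonneg_pos)
  then show "\<exists>y. (F has_real_derivative y) (at x) \<and> 0 < y"
    using F_has_real_derivative by blast
qed (meson DERIV_isCont F_has_real_derivative continuous_at_imp_continuous_on)

lemma F_zero [simp]: "F 0 = 0"
  by (simp add: F_def)

lemma F_pos: "0 < v \<Longrightarrow> 0 < F v"
  using F_strict_mono[of 0 v] by simp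

lemma F_tendsto_pi_half: "(F \<longlongrightarrow> pi / 2) at_top"
  unfolding F_def[abs_def] by real_asymp

lemma F_less_pi_half:
  assumes "0 \<le> v"
  shows "F v < pi / 2"
proof -
  have "\<forall>\<^sub>F y in at_top. F (v + 1) \<le> F y"
    using eventually_ge_at_top[of "v + 1"]
    by eventually_elim (metis F_strict_mono assms add_nonneg_nonneg less_eq_real_def zero_le_one)
  then have "F (v + 1) \<le> pi / 2"
    by (rule tendsto_lowerbound[OF F_tendsto_pi_half]) simp
  then show ?thesis
    using F_strict_mono[of v "v + 1"] assms by simp
qed

lemma F_bij_pos:
  assumes "0 < y" "y < pi / 2"
  shows "\<exists>!v. 0 < v \<and> F v = y"
proof -
  obtain N where N: "0 \<le> N" "y < F N"
    using eventually_conj[OF order_tendstoD(1)[OF F_tendsto_pi_half assms(2)] eventually_ge_at_top[of 0]]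
    by (auto simp: eventually_at_top_linorder)
  have "continuous_on {0..N} F"
    by (meson DERIV_isCont F_has_real_derivative continuous_at_imp_continuous_on)
  then obtain v where v: "0 \<le> v" "F v = y"
    using IVT'[of F 0 y N] assms N by auto
  with assms have "0 < v"
    by (metis F_zero order_less_irrefl order_le_less)
  moreover have "w = v" if "0 < w" "F w = y" for w
    using F_strict_mono[of v w] F_strict_mono[of w v] that v by (cases v w rule: linorder_cases) auto
  ultimately show ?thesis
    using v by blast
qed

lemma F_vc_eq_G:
  assumes "0 < G \<nu> v0 \<omega>0 t" "G \<nu> v0 \<omega>0 t < pi / 2"
  shows "0 < vc \<nu> v0 \<omega>0 t" "F (vc \<nu> v0 \<omega>0 t) = G \<nu> v0 \<omega>0 t"
  using theI'[OF F_bij_pos[OF assms]] unfolding vc_def by auto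

lemma filterlim_at_top_if_F_tendsto_pi_half:
  assumes "((\<lambda>x. F (h x)) \<longlongrightarrow> pi / 2) L" "\<forall>\<^sub>F x in L. 0 \<le> h x"
  shows "filterlim h at_top L"
  unfolding filterlim_at_top
proof
  fix Z :: real
  have "F (max Z 0) < pi / 2"
    by (rule F_less_pi_half) simp
  with order_tendstoD(1)[OF assms(1)] have "\<forall>\<^sub>F x in L. F (max Z 0) < F (h x)"
    by blast
  with assms(2) show "\<forall>\<^sub>F x in L. Z \<le> h x"
    by eventually_elim (metis F_strict_mono max.cobounded1 max.cobounded2 not_le order.trans order_less_asym)
qed

lemma filterlim_vc_at_top:
  assumes "(G \<nu> v0 \<omega>0 \<longlongrightarrow> pi / 2) L"
    and "\<forall>\<^sub>F t in L. 0 < G \<nu> v0 \<omega>0 t \<and> G \<nu> v0 \<omega>0 t < pi / 2"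
  shows "filterlim (vc \<nu> v0 \<omega>0) at_top L"
proof -
  have vc_sol: "\<forall>\<^sub>F t in L. 0 < vc \<nu> v0 \<omega>0 t \<and> F (vc \<nu> v0 \<omega>0 t) = G \<nu> v0 \<omega>0 t"
    using assms(2) by eventually_elim (simp add: F_vc_eq_G)
  have "((\<lambda>t. F (vc \<nu> v0 \<omega>0 t)) \<longlongrightarrow> pi / 2) L"
    using assms(1) by (rule Lim_transform_eventually) (use vc_sol in \<open>auto elim: eventually_mono\<close>)
  then show ?thesis
    by (rule filterlim_at_top_if_F_tendsto_pi_half) (use vc_sol in \<open>auto elim: eventually_mono\<close>)
qed

lemma f_inf_eq:
  assumes "0 < v"
  shows "f_inf v = (F v - pi / 2) * ((v^2 - 1) * (v^2 + 1)^2 / v)"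
proof -
  have "0 < v^2 + 1"
    by (simp add: add_nonneg_pos)
  then have "v^2 + 1 \<noteq> 0" "(v^2 + 1)^2 \<noteq> 0"
    by auto
  then show ?thesis
    unfolding f_inf_def F_def using assms
    by (simp add: divide_simps) (simp add: eval_nat_numeral algebra_simps)
qed

lemma rate_exceeds_gap:
  assumes "0 < \<nu>" "0 < v0"
    and "(v0 < 1 \<and> \<omega>0 < - \<nu> / 2 * f_inf v0) \<or> (1 < v0 \<and> - \<nu> / 2 * f_inf v0 < \<omega>0)"
  shows "pi / 2 - F v0 < 2 * \<omega>0 * v0 / (\<nu> * (v0^2 - 1) * (v0^2 + 1)^2)"
proof -
  define D where "D = (v0^2 - 1) * (v0^2 + 1)^2 / v0"
  define gap where "gap = pi / 2 - F v0"
  have "0 < v0^2 + 1"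
    by (simp add: add_nonneg_pos)
  then have "0 < (v0^2 + 1)^2"
    by simp
  have rate: "2 * \<omega>0 * v0 / (\<nu> * (v0^2 - 1) * (v0^2 + 1)^2) = 2 * \<omega>0 / \<nu> / D"
    unfolding D_def using assms(1,2) by (simp add: field_simps)
  have "- \<nu> / 2 * f_inf v0 = \<nu> / 2 * (gap * D)"
    unfolding D_def gap_def f_inf_eq[OF assms(2)] by (simp add: algebra_simps)
  then have threshold: "(\<omega>0 < - \<nu> / 2 * f_inf v0) = (2 * \<omega>0 / \<nu> < gap * D)"
    "(- \<nu> / 2 * f_inf v0 < \<omega>0) = (gap * D < 2 * \<omega>0 / \<nu>)"
    using assms(1) by (simp_all add: field_simps)
  from assms(3) have "gap < 2 * \<omega>0 / \<nu> / D"
  proof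
    assume "v0 < 1 \<and> \<omega>0 < - \<nu> / 2 * f_inf v0"
    moreover from this have "D < 0"
      unfolding D_def using assms(2) \<open>0 < (v0^2 + 1)^2\<close>
      by (simp add: divide_neg_pos mult_neg_pos power_less_one_iff)
    ultimately have "2 * \<omega>0 / \<nu> < gap * D" "D < 0"
      using threshold by auto
    then show ?thesis
      by (simp only: neg_less_divide_eq)
  next
    assume "1 < v0 \<and> - \<nu> / 2 * f_inf v0 < \<omega>0"
    moreover from this have "0 < D"
      unfolding D_def using assms(2) \<open>0 < (v0^2 + 1)^2\<close> by (simp add: one_less_power)
    ultimately have "gap * D < 2 * \<omega>0 / \<nu>" "0 < D"
      using threshold by auto
    then show ?thesis
      by (simp only: pos_less_divide_eq)
  qed
  then show ?thesis
    unfolding rate gap_def .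
qed

lemma exp_saturation_time:
  fixes \<nu> a c :: real
  assumes "0 < \<nu>" "0 < a" "a < c"
  obtains tc where "0 < tc" "c * (1 - exp (- \<nu> * tc)) = a"
    "\<And>t. 0 \<le> t \<Longrightarrow> t < tc \<Longrightarrow> 0 \<le> c * (1 - exp (- \<nu> * t)) \<and> c * (1 - exp (- \<nu> * t)) < a"
proof
  define r where "r = 1 - a / c"
  have "0 < r" "r < 1"
    unfolding r_def using assms by (simp_all add: field_simps)
  have "ln r < 0"
    using \<open>0 < r\<close> \<open>r < 1\<close> by simp
  then show "0 < - ln r / \<nu>"
    using assms(1) by (simp add: divide_neg_pos)
  have "exp (- \<nu> * (- ln r / \<nu>)) = r"
    using assms(1) \<open>0 < r\<close> by simp
  then show "c * (1 - exp (- \<nu> * (- ln r / \<nu>))) = a"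
    unfolding r_def using assms by simp
  fix t assume "0 \<le> t" "t < - ln r / \<nu>"
  then have "ln r < - \<nu> * t"
    using assms(1) by (simp add: field_simps)
  then have "r < exp (- \<nu> * t)"
    using \<open>0 < r\<close> by (metis exp_less_cancel_iff exp_ln)
  moreover have "exp (- \<nu> * t) \<le> 1"
    using assms(1) \<open>0 \<le> t\<close> by simp
  ultimately show "0 \<le> c * (1 - exp (- \<nu> * t)) \<and> c * (1 - exp (- \<nu> * t)) < a"
    unfolding r_def using assms by (auto simp: field_simps)
qed

theorem lemma3p6:
  fixes \<nu> v0 \<omega>0 :: real
  assumes "\<nu> > 0" and "v0 > 0" and "v0 \<noteq> 1"
    and "(0 < v0 \<and> v0 < 1 \<and> \<omega>0 < - \<nu> / 2 * f_inf v0) \<or> (v0 > 1 \<and> \<omega>0 > - \<nu> / 2 * f_inf v0)"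
  shows "type_B_blowup \<nu> v0 \<omega>0"
proof -
  define c where "c = 2 * \<omega>0 * v0 / (\<nu> * (v0^2 - 1) * (v0^2 + 1)^2)"
  have G_eq: "G \<nu> v0 \<omega>0 t = F v0 + c * (1 - exp (- \<nu> * t))" for t
    unfolding G_def c_def by simp
  have "0 < pi / 2 - F v0"
    using F_less_pi_half[of v0] assms(2) by simp
  moreover have "pi / 2 - F v0 < c"
    unfolding c_def using rate_exceeds_gap[of \<nu> v0 \<omega>0] assms(1,2,4) by blast
  ultimately obtain tc where tc: "0 < tc" "c * (1 - exp (- \<nu> * tc)) = pi / 2 - F v0"
    and below: "\<And>t. 0 \<le> t \<Longrightarrow> t < tc \<Longrightarrow>
      0 \<le> c * (1 - exp (- \<nu> * t)) \<and> c * (1 - exp (- \<nu> * t)) < pi / 2 - F v0"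
    using exp_saturation_time[OF assms(1)] by blast
  have G_range: "0 < G \<nu> v0 \<omega>0 t \<and> G \<nu> v0 \<omega>0 t < pi / 2" if "t \<in> {0..<tc}" for t
    using below[of t] that F_pos[OF assms(2)] unfolding G_eq by auto
  have "((\<lambda>t. F v0 + c * (1 - exp (- \<nu> * t))) \<longlongrightarrow> F v0 + c * (1 - exp (- \<nu> * tc))) (at_left tc)"
    by (intro tendsto_intros)
  then have G_tendsto: "(G \<nu> v0 \<omega>0 \<longlongrightarrow> pi / 2) (at_left tc)"
    unfolding G_eq tc(2) by simp
  have "\<forall>\<^sub>F t in at_left tc. 0 < G \<nu> v0 \<omega>0 t \<and> G \<nu> v0 \<omega>0 t < pi / 2"
    using eventually_at_left_real[OF tc(1)] by eventually_elim (use G_range in auto)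
  with G_tendsto have "filterlim (vc \<nu> v0 \<omega>0) at_top (at_left tc)"
    by (rule filterlim_vc_at_top)
  then show ?thesis
    unfolding type_B_blowup_def using tc(1) G_range by blast
qed

end
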